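(* For all positive real numbers $a\neq b$ and all $t\in(0,1)$, \[ a^{1-t}b^t\le \frac{1}{e}\big((1-t)a+tb\big)^{\frac{(1-2t)(tb+(1-t)a)}{t(1-t)(b-a)}}\left(\frac{b^{\frac{tb}{1-t}}}{a^{\frac{(1-t)a}{t}}}\right)^{\frac{1}{b-a}}\le (1-t)a+tb. \] *)

theory Defs
  imports Complex_Main
begin
end

theory Submission
  imports Defs "HOL-Analysis.Convex"
begin

text \<open>
  Let \<open>m = (1 - t) a + t b\<close> and let \<open>I(x, y) = (y^y / x^x)^(1 / (y - x)) / e\<close> be the
  identric mean. Since \<open>m - a = t (b - a)\<close> and \<open>b - m = (1 - t) (b - a)\<close>, the middle term is
  \<open>I(a, m)^(1 - t) I(m, b)^t\<close>. The identric mean lies between the geometric and the arithmetic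
  mean, so the middle term is at most \<open>((a + m) / 2)^(1 - t) ((m + b) / 2)^t\<close>, which by weighted
  AM-GM is at most \<open>(1 - t) (a + m) / 2 + t (m + b) / 2 = m\<close>; and it is at least
  \<open>sqrt (a m)^(1 - t) sqrt (m b)^t = sqrt (a^(1 - t) b^t m)\<close>, which dominates \<open>a^(1 - t) b^t\<close> because
  \<open>a^(1 - t) b^t \<le> m\<close>, again by weighted AM-GM.
\<close>

lemma ln_ge_two_mult_diff_div_add:
  fixes s :: real
  assumes "s \<ge> 1"
  shows "2 * (s - 1) \<le> (s + 1) * ln s"
proof -
  let ?g = "\<lambda>s::real. (s + 1) * ln s - 2 * (s - 1)"
  have "?g 1 \<le> ?g s"
  proof (rule DERIV_nonneg_imp_nondecreasing[OF assms])
    fix x :: real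
    assume x: "1 \<le> x" "x \<le> s"
    have D: "DERIV ?g x :> ln x + (x + 1) / x - 2"
      using x by (auto intro!: derivative_eq_intros simp: field_simps)
    have "1 - 1 / x \<le> ln x"
      using ln_le_minus_one[of "1 / x"] x by (simp add: ln_div)
    then have "ln x + (x + 1) / x - 2 \<ge> 0"
      using x by (simp add: field_simps)
    with D show "\<exists>y. DERIV ?g x :> y \<and> y \<ge> 0" by blast
  qed
  then show ?thesis by simp
qed

lemma mult_ln_le_diff_mult_ln_midpoint:
  fixes s :: real
  assumes "s \<ge> 1"
  shows "s * ln s - (s - 1) \<le> (s - 1) * ln ((1 + s) / 2)"
proof -
  let ?f = "\<lambda>s::real. (s - 1) * ln ((1 + s) / 2) - s * ln s + (s - 1)"
  have "?f 1 \<le> ?f s"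
  proof (rule DERIV_nonneg_imp_nondecreasing[OF assms])
    fix x :: real
    assume x: "1 \<le> x" "x \<le> s"
    have "DERIV ?f x :> ln ((1 + x) / 2) + (x - 1) * (inverse ((1 + x) / 2) * (1 / 2))
                          - (ln x + x * inverse x) + 1"
      using x by (auto intro!: derivative_eq_intros)
    moreover have "(x - 1) * (inverse ((1 + x) / 2) * (1 / 2)) = (x - 1) / (1 + x)"
      using x by (simp add: field_simps)
    moreover have "x * inverse x = 1"
      using x by simp
    ultimately have D: "DERIV ?f x :> ln ((1 + x) / 2) + (x - 1) / (1 + x) - ln x"
      by (simp add: algebra_simps)
    \<comment> \<open>\<open>ln u \<le> u - 1\<close> at \<open>u = 2 x / (1 + x)\<close>\<close>
    have "ln (2 * x / (1 + x)) \<le> (x - 1) / (1 + x)"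
      using ln_le_minus_one[of "2 * x / (1 + x)"] x by (simp add: field_simps)
    then have "ln ((1 + x) / 2) + (x - 1) / (1 + x) - ln x \<ge> 0"
      using x by (simp add: ln_div ln_mult)
    with D show "\<exists>y. DERIV ?f x :> y \<and> y \<ge> 0" by blast
  qed
  then show ?thesis by simp
qed

text \<open>For \<open>x = y\<close> the value is the junk \<open>exp (- 1)\<close>, not \<open>x\<close>.\<close>

definition identric_mean :: "real \<Rightarrow> real \<Rightarrow> real" where
  "identric_mean x y = exp ((y * ln y - x * ln x) / (y - x) - 1)"

lemma identric_mean_pos: "identric_mean x y > 0"
  by (simp add: identric_mean_def)

lemma identric_mean_commute: "identric_mean x y = identric_mean y x"
  unfolding identric_mean_def by (cases "x = y") (auto simp: field_simps)

lemma identric_mean_bounds_less: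
  fixes x y :: real
  assumes "0 < x" "x < y"
  shows "sqrt (x * y) \<le> identric_mean x y \<and> identric_mean x y \<le> (x + y) / 2"
proof -
  define s where "s = y / x"
  have s: "s > 1" "y = x * s" using assms by (simp_all add: s_def)
  have ln_I: "ln (identric_mean x y) = ln x + s * ln s / (s - 1) - 1"
    using assms s by (simp add: identric_mean_def ln_mult field_simps)
  have ln_G: "ln (sqrt (x * y)) = ln x + ln s / 2"
    using assms s by (simp add: ln_sqrt ln_mult)
  have "(x + y) / 2 = x * ((1 + s) / 2)"
    using s by (simp add: algebra_simps)
  also have "ln \<dots> = ln x + ln ((1 + s) / 2)"
    using assms s by (intro ln_mult_pos) auto
  finally have ln_A: "ln ((x + y) / 2) = ln x + ln ((1 + s) / 2)" .
  have "ln s / 2 \<le> s * ln s / (s - 1) - 1"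
    using ln_ge_two_mult_diff_div_add[of s] s by (simp add: field_simps)
  moreover have "s * ln s / (s - 1) - 1 \<le> ln ((1 + s) / 2)"
    using mult_ln_le_diff_mult_ln_midpoint[of s] s by (simp add: field_simps)
  ultimately have "ln (sqrt (x * y)) \<le> ln (identric_mean x y)"
    and "ln (identric_mean x y) \<le> ln ((x + y) / 2)"
    using ln_I ln_G ln_A by linarith+
  then show ?thesis
    using assms identric_mean_pos[of x y] by simp
qed

lemma identric_mean_bounds:
  fixes x y :: real
  assumes "0 < x" "0 < y" "x \<noteq> y"
  shows "sqrt (x * y) \<le> identric_mean x y \<and> identric_mean x y \<le> (x + y) / 2"
  using assms identric_mean_bounds_less[of x y] identric_mean_bounds_less[of y x]
  by (cases "x < y") (auto simp: identric_mean_commute mult.commute add.commute)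

lemma weighted_geometric_mean_mono:
  fixes u u' v v' t :: real
  assumes "0 \<le> u" "u \<le> u'" "0 \<le> v" "v \<le> v'" "0 \<le> t" "t \<le> 1"
  shows "u powr (1 - t) * v powr t \<le> u' powr (1 - t) * v' powr t"
  using assms by (intro mult_mono powr_mono2) auto

lemma weighted_geometric_mean_le_sqrt_means:
  fixes x y m t :: real
  assumes "0 < x" "0 < y" "x powr (1 - t) * y powr t \<le> m"
  shows "x powr (1 - t) * y powr t \<le> sqrt (x * m) powr (1 - t) * sqrt (m * y) powr t"
proof -
  let ?G = "x powr (1 - t) * y powr t"
  have "?G > 0"
    using assms by simp
  have "m > 0"
    using assms(3) \<open>?G > 0\<close> by linarith
  have sqrt_powr: "sqrt z powr r = sqrt (z powr r)" if "z > 0" for z r :: real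
    using that by (simp add: powr_half_sqrt[symmetric] powr_powr mult.commute)
  have "sqrt (x * m) powr (1 - t) * sqrt (m * y) powr t
        = sqrt (x powr (1 - t) * y powr t * (m powr (1 - t) * m powr t))"
    using assms(1,2) \<open>m > 0\<close> by (simp add: sqrt_powr powr_mult real_sqrt_mult algebra_simps)
  also have "m powr (1 - t) * m powr t = m"
    using \<open>m > 0\<close> by (simp flip: powr_add)
  finally have "sqrt (x * m) powr (1 - t) * sqrt (m * y) powr t = sqrt (?G * m)" .
  moreover have "?G = sqrt (?G * ?G)"
    using \<open>?G > 0\<close> by simp
  moreover have "sqrt (?G * ?G) \<le> sqrt (?G * m)"
    using assms(3) \<open>?G > 0\<close> by (intro real_sqrt_le_mono mult_left_mono) auto
  ultimately show ?thesis
    by simp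
qed

lemma convex_combination_pos_neq:
  fixes a b t :: real
  assumes "a > 0" "b > 0" "a \<noteq> b" "0 < t" "t < 1"
  shows "(1 - t) * a + t * b > 0" "(1 - t) * a + t * b \<noteq> a" "(1 - t) * a + t * b \<noteq> b"
proof -
  have "(1 - t) * a + t * b - a = t * (b - a)" "b - ((1 - t) * a + t * b) = (1 - t) * (b - a)"
    by (simp_all add: algebra_simps)
  then show "(1 - t) * a + t * b \<noteq> a" "(1 - t) * a + t * b \<noteq> b"
    using assms by auto
  show "(1 - t) * a + t * b > 0"
    using assms by (simp add: add_pos_pos)
qed

lemma identric_exponent_identity:
  fixes a b m s t d :: real
  assumes "t \<noteq> 0" "s \<noteq> 0" "d \<noteq> 0" "s + t = 1"
  shows "s * ((m * ln m - a * ln a) / (t * d) - 1) + t * ((b * ln b - m * ln m) / (s * d) - 1)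
         = (s - t) * m / (t * s * d) * ln m + 1 / d * (t * b / s * ln b - s * a / t * ln a) - 1"
proof -
  have "s * ((m * ln m - a * ln a) / (t * d) - 1) + t * ((b * ln b - m * ln m) / (s * d) - 1)
        = (s * s * (m * ln m - a * ln a) + t * t * (b * ln b - m * ln m)) / (t * s * d) - (s + t)"
    using assms(1-3) by (simp add: field_simps)
  also have "\<dots> = (s - t) * m / (t * s * d) * ln m + 1 / d * (t * b / s * ln b - s * a / t * ln a) - 1"
  proof -
    have s: "s = 1 - t"
      using assms(4) by simp
    show ?thesis
      using assms(1-3) by (simp add: field_simps) (simp add: algebra_simps s)
  qed
  finally show ?thesis .
qed

lemma weighted_identric_means_eq:
  fixes a b t m :: real
  assumes "a > 0" "b > 0" "a \<noteq> b" "0 < t" "t < 1" and m: "m = (1 - t) * a + t * b"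
  shows "(1 / exp 1) * m powr ((1 - 2 * t) * m / (t * (1 - t) * (b - a)))
           * (b powr (t * b / (1 - t)) / a powr ((1 - t) * a / t)) powr (1 / (b - a))
         = identric_mean a m powr (1 - t) * identric_mean m b powr t"
proof -
  have "m > 0"
    unfolding m using convex_combination_pos_neq[OF assms(1-5)] by simp
  have "m - a = t * (b - a)" and "b - m = (1 - t) * (b - a)"
    unfolding m by algebra+
  then have E: "(1 - 2 * t) * m / (t * (1 - t) * (b - a)) * ln m
          + 1 / (b - a) * (t * b / (1 - t) * ln b - (1 - t) * a / t * ln a) - 1
        = (1 - t) * ln (identric_mean a m) + t * ln (identric_mean m b)"
    using identric_exponent_identity[of t "1 - t" "b - a" m a b] assms(3-5)
    by (simp add: identric_mean_def)
  have "(1 / exp 1) * m powr ((1 - 2 * t) * m / (t * (1 - t) * (b - a)))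
           * (b powr (t * b / (1 - t)) / a powr ((1 - t) * a / t)) powr (1 / (b - a))
        = exp ((1 - 2 * t) * m / (t * (1 - t) * (b - a)) * ln m
          + 1 / (b - a) * (t * b / (1 - t) * ln b - (1 - t) * a / t * ln a) - 1)"
    using assms(1,2) \<open>m > 0\<close> by (simp add: powr_def exp_add exp_diff ln_div mult.commute)
  also have "\<dots> = identric_mean a m powr (1 - t) * identric_mean m b powr t"
    unfolding E using identric_mean_pos[of a m] identric_mean_pos[of m b]
    by (simp add: powr_def exp_add mult.commute)
  finally show ?thesis .
qed

lemma geometric_mean_le_weighted_identric_means:
  fixes a b t m :: real
  assumes "a > 0" "b > 0" "a \<noteq> b" "0 < t" "t < 1" and m: "m = (1 - t) * a + t * b"
  shows "a powr (1 - t) * b powr t \<le> identric_mean a m powr (1 - t) * identric_mean m b powr t"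
proof -
  have "m > 0" "m \<noteq> a" "m \<noteq> b"
    unfolding m using convex_combination_pos_neq[OF assms(1-5)] by auto
  have "a powr (1 - t) * b powr t \<le> m"
    unfolding m using assms by (intro Youngs_inequality_0) auto
  then have "a powr (1 - t) * b powr t \<le> sqrt (a * m) powr (1 - t) * sqrt (m * b) powr t"
    using assms by (intro weighted_geometric_mean_le_sqrt_means)
  also have "\<dots> \<le> identric_mean a m powr (1 - t) * identric_mean m b powr t"
    using assms \<open>m > 0\<close> \<open>m \<noteq> a\<close> \<open>m \<noteq> b\<close> identric_mean_bounds[of a m] identric_mean_bounds[of m b]
    by (intro weighted_geometric_mean_mono) auto
  finally show ?thesis .
qed

lemma weighted_identric_means_le_arithmetic_mean:
  fixes a b t m :: real
  assumes "a > 0" "b > 0" "a \<noteq> b" "0 < t" "t < 1" and m: "m = (1 - t) * a + t * b"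
  shows "identric_mean a m powr (1 - t) * identric_mean m b powr t \<le> m"
proof -
  have "m > 0" "m \<noteq> a" "m \<noteq> b"
    unfolding m using convex_combination_pos_neq[OF assms(1-5)] by auto
  have "identric_mean a m powr (1 - t) * identric_mean m b powr t
      \<le> ((a + m) / 2) powr (1 - t) * ((m + b) / 2) powr t"
    using assms \<open>m > 0\<close> \<open>m \<noteq> a\<close> \<open>m \<noteq> b\<close> identric_mean_bounds[of a m] identric_mean_bounds[of m b]
    by (intro weighted_geometric_mean_mono) (auto intro: less_imp_le[OF identric_mean_pos])
  also have "\<dots> \<le> (1 - t) * ((a + m) / 2) + t * ((m + b) / 2)"
    using assms \<open>m > 0\<close> by (intro Youngs_inequality_0) auto
  also have "\<dots> = m"
    by (simp add: m field_simps)
  finally show ?thesis .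
qed

theorem theorem3p1:
  fixes a b t :: real
  assumes "a > 0" and "b > 0" and "a \<noteq> b" and "0 < t" and "t < 1"
  shows "a powr (1 - t) * b powr t
           \<le> (1 / exp 1) * ((1 - t) * a + t * b) powr
                 (((1 - 2 * t) * (t * b + (1 - t) * a)) / (t * (1 - t) * (b - a)))
               * (b powr (t * b / (1 - t)) / a powr ((1 - t) * a / t)) powr (1 / (b - a))
         \<and> (1 / exp 1) * ((1 - t) * a + t * b) powr
                 (((1 - 2 * t) * (t * b + (1 - t) * a)) / (t * (1 - t) * (b - a)))
               * (b powr (t * b / (1 - t)) / a powr ((1 - t) * a / t)) powr (1 / (b - a))
           \<le> (1 - t) * a + t * b"
proof -
  define m where "m = (1 - t) * a + t * b"
  have "t * b + (1 - t) * a = m"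
    by (simp add: m_def)
  then show ?thesis
    unfolding m_def[symmetric]
    using weighted_identric_means_eq[OF assms m_def]
      geometric_mean_le_weighted_identric_means[OF assms m_def]
      weighted_identric_means_le_arithmetic_mean[OF assms m_def]
    by simp
qed

end
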